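(* With $\alpha=(1+\sqrt5)/2$, $$\sum_{k=1}^\infty\frac{1}{5^k(2k-1)(2k)(2k+1)}=\frac12\ln\frac45+\frac{3}{\sqrt5}\ln\alpha-\frac12,$$ $$\sum_{k=1}^\infty\frac{4^k}{5^k(2k-1)(2k)(2k+1)}=-\frac12\ln 5+\frac{27}{4\sqrt5}\ln\alpha-\frac12,$$ $$\sum_{k=1}^\infty\frac{5^k}{9^k(2k-1)(2k)(2k+1)}=\ln\frac23+\frac{14}{3\sqrt5}\ln\alpha-\frac12.$$ *)

theory Defs
  imports "HOL-Analysis.Analysis"
begin

end

theory Submission
  imports Defs
begin

text \<open>By partial fractions, 1/((2k-1) 2k (2k+1)) = 1/(2(2k-1)) - 1/(2k) + 1/(2(2k+1)), so for
  0 < |y| < 1 the series \<Sum>k\<ge>1. y^(2k)/((2k-1) 2k (2k+1)) splits into the series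
  artanh y = \<Sum>k\<ge>0. y^(2k+1)/(2k+1) and -ln (1 - y^2) = \<Sum>k\<ge>1. y^(2k)/k, with sum
  (y + 1/y)/2 artanh y + ln (1 - y^2)/2 - 1/2.
  The three series are the cases y^2 = 1/5, 4/5, 5/9, where (1+y)/(1-y) is \<alpha>^2, \<alpha>^6, \<alpha>^4,
  so that artanh y is ln \<alpha>, 3 ln \<alpha>, 2 ln \<alpha>.\<close>

lemma artanh_real_sums:
  fixes y :: real
  assumes "\<bar>y\<bar> < 1"
  shows "(\<lambda>n. y ^ (2*n+1) / real (2*n+1)) sums artanh y"
proof -
  have pos: "(1 + y) / (1 - y) > 0" using assms by simp
  have "((1 + y) / (1 - y) - 1) / ((1 + y) / (1 - y) + 1) = y"
    using assms by (simp add: field_simps)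
  with ln_series_quadratic[OF pos]
  have "(\<lambda>n. 2 * y ^ (2*n+1) / real (2*n+1)) sums (2 * artanh y)"
    by (simp add: artanh_def)
  from sums_mult[OF this, of "1/2"] show ?thesis by simp
qed

lemma ln_one_minus_real_sums:
  fixes x :: real
  assumes "\<bar>x\<bar> < 1"
  shows "(\<lambda>n. x ^ Suc n / real (Suc n)) sums - ln (1 - x)"
proof -
  have "(\<lambda>n. - (x ^ n) / real n) sums ln (1 - x)"
    using ln_series'[of "- x"] assms by simp
  then have "(\<lambda>n. - (x ^ Suc n) / real (Suc n)) sums ln (1 - x)"
    by (subst sums_Suc_iff) simp
  then show ?thesis using sums_minus by fastforce
qed

lemma odd_triple_product_partial_fractions:
  fixes y :: real and n :: nat
  assumes "y \<noteq> 0"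
  defines "k \<equiv> real (Suc n)"
  shows "(y^2) ^ Suc n / ((2*k - 1) * (2*k) * (2*k + 1)) =
    y/2 * (y ^ (2*n+1) / real (2*n+1)) - (y^2) ^ Suc n / real (Suc n) / 2
      + 1/(2*y) * (y ^ (2 * Suc n + 1) / real (2 * Suc n + 1))"
proof -
  have partial_fractions: "y^2 * p / ((2*x - 1) * (2*x) * (2*x + 1)) =
      y/2 * (y * p / (2*x - 1)) - y^2 * p / x / 2 + 1/(2*y) * (y^3 * p / (2*x + 1))"
    if "x \<ge> 1" for x p :: real
  proof -
    have "2*x - 1 \<noteq> 0" "2*x + 1 \<noteq> 0" "x \<noteq> 0" "(2*x - 1) * (2*x) * (2*x + 1) \<noteq> 0"
      using that by auto
    with assms show ?thesis by (simp add: field_simps power2_eq_square power3_eq_cube)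
  qed
  have powers: "y ^ (2*n+1) = y * (y^2) ^ n" "y ^ (2 * Suc n + 1) = y^3 * (y^2) ^ n"
      "(y^2) ^ Suc n = y^2 * (y^2) ^ n"
    by (simp_all add: power_mult[symmetric] power_add[symmetric] numeral_3_eq_3)
  have odd_factors: "real (2*n+1) = 2*k - 1" "real (2 * Suc n + 1) = 2*k + 1"
    by (simp_all add: k_def)
  show ?thesis
    unfolding powers odd_factors k_def[symmetric] by (rule partial_fractions) (simp add: k_def)
qed

lemma sums_power_div_odd_triple_product:
  fixes y :: real
  assumes "y \<noteq> 0" "\<bar>y\<bar> < 1"
  shows "(\<lambda>n. (y^2) ^ Suc n / ((2 * real (Suc n) - 1) * (2 * real (Suc n)) * (2 * real (Suc n) + 1)))
    sums ((y + 1/y) / 2 * artanh y + ln (1 - y^2) / 2 - 1/2)"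
proof -
  have odd: "(\<lambda>n. y ^ (2*n+1) / real (2*n+1)) sums artanh y"
    using assms(2) by (rule artanh_real_sums)
  then have odd_shifted: "(\<lambda>n. y ^ (2 * Suc n + 1) / real (2 * Suc n + 1)) sums (artanh y - y)"
    by (subst sums_Suc_iff) simp
  have "\<bar>y^2\<bar> < 1"
    using assms(2) by (simp add: abs_square_less_1)
  then have log: "(\<lambda>n. (y^2) ^ Suc n / real (Suc n)) sums - ln (1 - y^2)"
    by (rule ln_one_minus_real_sums)
  have "(\<lambda>n. y/2 * (y ^ (2*n+1) / real (2*n+1)) - (y^2) ^ Suc n / real (Suc n) / 2
      + 1/(2*y) * (y ^ (2 * Suc n + 1) / real (2 * Suc n + 1)))
    sums (y/2 * artanh y - - ln (1 - y^2) / 2 + 1/(2*y) * (artanh y - y))"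
    by (intro sums_add sums_diff sums_mult sums_divide odd odd_shifted log)
  also have "y/2 * artanh y - - ln (1 - y^2) / 2 + 1/(2*y) * (artanh y - y) =
      (y + 1/y) / 2 * artanh y + ln (1 - y^2) / 2 - 1/2"
    using assms(1) by (simp add: field_simps)
  finally show ?thesis
    by (simp only: odd_triple_product_partial_fractions[OF assms(1)])
qed

lemma sums_ratio_power_div_odd_triple_product:
  fixes y a b s :: real
  assumes "y \<noteq> 0" "\<bar>y\<bar> < 1" "y^2 = a / b"
    and "(y + 1/y) / 2 * artanh y + ln (1 - a / b) / 2 - 1/2 = s"
  shows "(\<lambda>n. let k = Suc n in a ^ k / (b ^ k * (2 * real k - 1) * (2 * real k) * (2 * real k + 1)))
    sums s"
  using sums_power_div_odd_triple_product[OF assms(1,2), unfolded assms(3,4)]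
  by (simp only: Let_def power_divide divide_divide_eq_left mult.assoc)

lemma artanh_real_eq_mult_ln:
  fixes y r :: real
  assumes "r > 0" "(1 + y) / (1 - y) = r ^ (2 * m)"
  shows "artanh y = m * ln r"
  using assms by (simp add: artanh_def ln_realpow)

lemma artanh_golden_ratio:
  defines "\<phi> \<equiv> (1 + sqrt 5) / 2"
  shows "artanh (1 / sqrt 5) = ln \<phi>" "artanh (sqrt 5 / 3) = 2 * ln \<phi>"
    "artanh (2 / sqrt 5) = 3 * ln \<phi>"
proof -
  have sqrt5: "2 < sqrt 5" "sqrt 5 < 9/4" "sqrt 5 ^ 2 = 5"
    by (rule real_less_rsqrt, simp) (rule real_less_lsqrt, simp_all add: power2_eq_square)
  then have "2 * sqrt 5 \<noteq> 5" by linarith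
  have "\<phi> > 0" using sqrt5 by (simp add: \<phi>_def)
  have \<phi>2: "\<phi> ^ 2 = (3 + sqrt 5) / 2"
    by (simp add: \<phi>_def power2_eq_square field_simps)
  have ratios: "(1 + 1 / sqrt 5) / (1 - 1 / sqrt 5) = \<phi> ^ (2 * 1)"
      "(1 + sqrt 5 / 3) / (1 - sqrt 5 / 3) = \<phi> ^ (2 * 2)"
      "(1 + 2 / sqrt 5) / (1 - 2 / sqrt 5) = \<phi> ^ (2 * 3)"
    unfolding power_mult \<phi>2 using sqrt5 \<open>2 * sqrt 5 \<noteq> 5\<close>
    by (simp_all add: field_simps power2_eq_square power3_eq_cube)
  show "artanh (1 / sqrt 5) = ln \<phi>" "artanh (sqrt 5 / 3) = 2 * ln \<phi>"
      "artanh (2 / sqrt 5) = 3 * ln \<phi>"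
    using ratios[THEN artanh_real_eq_mult_ln[OF \<open>\<phi> > 0\<close>]] by simp_all
qed

theorem corollary5:
  defines "\<alpha> \<equiv> (1 + sqrt 5) / 2"
  shows "((\<lambda>n. let k = Suc n in 1 / (5 ^ k * (2 * real k - 1) * (2 * real k) * (2 * real k + 1)))
           sums (1/2 * ln (4/5) + 3 / sqrt 5 * ln \<alpha> - 1/2)) \<and>
         ((\<lambda>n. let k = Suc n in 4 ^ k / (5 ^ k * (2 * real k - 1) * (2 * real k) * (2 * real k + 1)))
           sums (- 1/2 * ln 5 + 27 / (4 * sqrt 5) * ln \<alpha> - 1/2)) \<and>
         ((\<lambda>n. let k = Suc n in 5 ^ k / (9 ^ k * (2 * real k - 1) * (2 * real k) * (2 * real k + 1)))
           sums (ln (2/3) + 14 / (3 * sqrt 5) * ln \<alpha> - 1/2))"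
proof (intro conjI)
  have sqrt5: "2 < sqrt 5" "sqrt 5 < 3"
    by (rule real_less_rsqrt, simp) (rule real_less_lsqrt, simp_all)
  have ln_four_ninths: "ln (4/9 :: real) = 2 * ln (2/3)"
    using ln_realpow[of "2/3 :: real" 2] by (simp add: power_divide)
  note artanh_golden = artanh_golden_ratio[folded \<alpha>_def]
  have "(\<lambda>n. let k = Suc n in 1 ^ k / (5 ^ k * (2 * real k - 1) * (2 * real k) * (2 * real k + 1)))
      sums (1/2 * ln (4/5) + 3 / sqrt 5 * ln \<alpha> - 1/2)"
    by (rule sums_ratio_power_div_odd_triple_product[where y = "1 / sqrt 5"])
      (use sqrt5 in \<open>simp_all add: artanh_golden power_divide field_simps\<close>)
  then show "(\<lambda>n. let k = Suc n in 1 / (5 ^ k * (2 * real k - 1) * (2 * real k) * (2 * real k + 1)))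
      sums (1/2 * ln (4/5) + 3 / sqrt 5 * ln \<alpha> - 1/2)"
    by simp
  show "(\<lambda>n. let k = Suc n in 4 ^ k / (5 ^ k * (2 * real k - 1) * (2 * real k) * (2 * real k + 1)))
      sums (- 1/2 * ln 5 + 27 / (4 * sqrt 5) * ln \<alpha> - 1/2)"
    by (rule sums_ratio_power_div_odd_triple_product[where y = "2 / sqrt 5"])
      (use sqrt5 in \<open>simp_all add: artanh_golden power_divide field_simps ln_div\<close>)
  show "(\<lambda>n. let k = Suc n in 5 ^ k / (9 ^ k * (2 * real k - 1) * (2 * real k) * (2 * real k + 1)))
      sums (ln (2/3) + 14 / (3 * sqrt 5) * ln \<alpha> - 1/2)"
    by (rule sums_ratio_power_div_odd_triple_product[where y = "sqrt 5 / 3"])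
      (use sqrt5 in \<open>simp_all add: artanh_golden power_divide field_simps ln_four_ninths\<close>)
qed

end
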